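(* Let $q$ be a prime power, $\xi$ a generator of the cyclic group $\mathbb{F}_q^*$, and $t\ge 2$ an integer. Let $A'_{t,q}$ be the $t\times\big(\binom{t}{2}(q-1)+t+q-2\big)$ matrix obtained from $A_{t,q}$ by appending $q-2$ columns whose first entries are $\xi,\xi^2,\dots,\xi^{q-2}$ respectively and whose other entries are $0$. Then the linear code $\mathcal{C}'$ generated by $A'_{t,q}$ is a minimal $\big[\binom{t}{2}(q-1)+t+q-2,\,t\big]_q$ code satisfying Property (P).
   Context: $A_{t,q}=(\mathbb{I}_t\mid \mathbb{B}_{t,q})$ is the $t\times\big(t+\binom{t}{2}(q-1)\big)$ matrix over $\mathbb{F}_q$, where $\mathbb{I}_t$ is the identity matrix and $\mathbb{B}_{t,q}$ has as columns exactly the vectors $e_i+\lambda e_j$, one for each pair $1\le i<j\le t$ and each $\lambda\in\mathbb{F}_q^*$. The code generated by a matrix is its row space. Property (P): every nonzero codeword $w=(w_1,\dots,w_n)$ satisfies $\{w_1,\dots,w_n\}=\mathbb{F}_q$. A linear code $\mathcal{C}$ is minimal if for all nonzero $c,c'\in\mathcal{C}$ whose supports (sets of nonzero coordinate indices) satisfy $\mathrm{Supp}(c')\subseteq\mathrm{Supp}(c)$, there is $\lambda\in\mathbb{F}_q^*$ with $c'=\lambda c$. *)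

theory Defs
  imports Main
begin

text \<open>Vectors in F_q^t are functions nat => 'a, only indices below t being relevant.
  A t x n matrix is represented by the list of its n columns.\<close>

definition unit_vec :: "nat \<Rightarrow> nat \<Rightarrow> 'a::zero_neq_one" where
  "unit_vec i = (\<lambda>k. if k = i then 1 else 0)"

definition codeword :: "nat \<Rightarrow> (nat \<Rightarrow> 'a::comm_semiring_1) list \<Rightarrow> (nat \<Rightarrow> 'a) \<Rightarrow> 'a list" where
  "codeword t cols m = map (\<lambda>c. \<Sum>i<t. m i * c i) cols"

definition gen_code :: "nat \<Rightarrow> (nat \<Rightarrow> 'a::comm_semiring_1) list \<Rightarrow> 'a list set" where
  "gen_code t cols = range (codeword t cols)"

definition supp :: "'a::zero list \<Rightarrow> nat set" where
  "supp w = {k. k < length w \<and> w ! k \<noteq> 0}"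

definition minimal_code :: "'a::field list set \<Rightarrow> bool" where
  "minimal_code C \<longleftrightarrow> (\<forall>c\<in>C. \<forall>c'\<in>C. supp c \<noteq> {} \<and> supp c' \<noteq> {} \<and> supp c' \<subseteq> supp c
      \<longrightarrow> (\<exists>l. l \<noteq> 0 \<and> c' = map (\<lambda>x. l * x) c))"

definition property_P :: "'a::zero list set \<Rightarrow> bool" where
  "property_P C \<longleftrightarrow> (\<forall>w\<in>C. supp w \<noteq> {} \<longrightarrow> set w = UNIV)"

text \<open>The set of columns of B_{t,q}: e_i + lambda e_j, i<j, lambda nonzero (0-based indices).\<close>
definition B_col_set :: "nat \<Rightarrow> (nat \<Rightarrow> 'a::field) set" where
  "B_col_set t = {(\<lambda>k. unit_vec i k + l * unit_vec j k) | i j l. i < j \<and> j < t \<and> l \<noteq> 0}"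

text \<open>Columns of A'_{t,q} = (I_t | B | xi e_1 ... xi^(q-2) e_1), given a column listing B of B_{t,q}.\<close>
definition A'_cols :: "nat \<Rightarrow> (nat \<Rightarrow> 'a::{field,finite}) list \<Rightarrow> 'a \<Rightarrow> (nat \<Rightarrow> 'a) list" where
  "A'_cols t B \<xi> = map unit_vec [0..<t] @ B @ map (\<lambda>j k. \<xi> ^ j * unit_vec 0 k) [1..<card (UNIV::'a set) - 1]"

end

theory Submission
  imports Defs
begin

text \<open>The identity block makes the code systematic, so it has \<open>q^t\<close> codewords. The coordinate
  of the codeword of a message \<open>m\<close> at the column \<open>e\<^sub>a + \<lambda> e\<^sub>b\<close> is \<open>m\<^sub>a + \<lambda> m\<^sub>b\<close>.

  Minimality: if \<open>supp c' \<subseteq> supp c\<close>, every column annihilated by \<open>m\<close> is annihilated by \<open>m'\<close>.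
  The columns \<open>e\<^sub>a\<close> and \<open>e\<^sub>a - (m\<^sub>a/m\<^sub>b) e\<^sub>b\<close> then force \<open>m'\<^sub>a m\<^sub>b = m\<^sub>a m'\<^sub>b\<close>
  for all \<open>a, b\<close>, i.e. \<open>m'\<close> is a multiple of \<open>m\<close>.

  Property (P): if \<open>m\<close> has two nonzero entries \<open>m\<^sub>a, m\<^sub>b\<close>, the values \<open>m\<^sub>a + \<lambda> m\<^sub>b\<close>
  (\<open>\<lambda> \<noteq> 0\<close>) together with \<open>m\<^sub>a\<close> exhaust the field. If \<open>m = m\<^sub>i e\<^sub>i\<close>, the value 0 comes
  from another unit column (here \<open>t \<ge> 2\<close> is needed) and the nonzero values from the columns
  \<open>e\<^sub>0 + \<lambda> e\<^sub>i\<close> when \<open>i \<noteq> 0\<close>; for \<open>i = 0\<close> the columns of \<open>A_{t,q}\<close> only yield the value \<open>m\<^sub>0\<close>,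
  and the appended columns \<open>\<xi>\<^sup>k e\<^sub>0\<close> supply the rest.\<close>

definition dot :: "nat \<Rightarrow> (nat \<Rightarrow> 'a::comm_semiring_1) \<Rightarrow> (nat \<Rightarrow> 'a) \<Rightarrow> 'a" where
  "dot t m v = (\<Sum>i<t. m i * v i)"

definition pair_col :: "nat \<Rightarrow> nat \<Rightarrow> 'a::field \<Rightarrow> nat \<Rightarrow> 'a" where
  "pair_col i j l = (\<lambda>k. unit_vec i k + l * unit_vec j k)"

lemma codeword_eq_map_dot: "codeword t cols m = map (dot t m) cols"
  by (simp add: codeword_def dot_def)

lemma set_codeword: "set (codeword t cols m) = dot t m ` set cols"
  by (simp add: codeword_eq_map_dot)

lemma dot_add: "dot t m (\<lambda>k. u k + v k) = dot t m u + dot t m v"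
  by (simp add: dot_def distrib_left sum.distrib)

lemma dot_scale: "dot t m (\<lambda>k. c * v k) = c * dot t m (v :: nat \<Rightarrow> 'a::comm_semiring_1)"
  by (simp add: dot_def sum_distrib_left mult.left_commute)

lemma dot_unit_vec: "j < t \<Longrightarrow> dot t m (unit_vec j) = (m j :: 'a::comm_semiring_1)"
  by (simp add: dot_def unit_vec_def if_distrib cong: if_cong)

lemma dot_pair_col: "a < t \<Longrightarrow> b < t \<Longrightarrow> dot t m (pair_col a b l) = m a + l * (m b :: 'a::field)"
  by (simp add: pair_col_def dot_add dot_scale dot_unit_vec)

lemma nonzero_coordinate_if_supp_codeword:
  assumes "supp (codeword t cols m) \<noteq> {}"
  obtains i where "i < t" "(m i :: 'a::comm_semiring_1) \<noteq> 0"
proof -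
  have "\<exists>i<t. m i \<noteq> 0"
  proof (rule ccontr)
    assume "\<not> (\<exists>i<t. m i \<noteq> 0)"
    then have "dot t m v = 0" for v by (simp add: dot_def)
    then show False using assms by (simp add: supp_def codeword_eq_map_dot)
  qed
  then show thesis using that by blast
qed

lemma codeword_scale:
  assumes "\<And>j. j < t \<Longrightarrow> m' j = c * m j"
  shows "codeword t cols m' = map (\<lambda>x. c * x) (codeword t cols (m :: nat \<Rightarrow> 'a::comm_semiring_1))"
  using assms by (auto simp: codeword_def sum_distrib_left mult.assoc intro!: sum.cong)

lemma card_gen_code_systematic:
  fixes cols :: "(nat \<Rightarrow> 'a::{comm_semiring_1,finite}) list"
  assumes "cols = map unit_vec [0..<t] @ rest"
  shows "card (gen_code t cols) = card (UNIV :: 'a set) ^ t"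
proof -
  have take_codeword: "take t (codeword t cols m) = map m [0..<t]" for m
    using assms by (simp add: codeword_eq_map_dot dot_unit_vec)
  have inj: "inj_on (take t) (gen_code t cols)"
  proof (rule inj_onI)
    fix x y assume "x \<in> gen_code t cols" "y \<in> gen_code t cols" "take t x = take t y"
    then obtain m m' where "x = codeword t cols m" "y = codeword t cols m'" "\<forall>i<t. m i = m' i"
      by (auto simp: gen_code_def take_codeword map_eq_conv)
    then show "x = y"
      by (simp add: codeword_eq_map_dot dot_def)
  qed
  have image: "take t ` gen_code t cols = {xs. set xs \<subseteq> UNIV \<and> length xs = t}"
  proof (intro equalityI subsetI)
    fix xs :: "'a list" assume "xs \<in> {xs. set xs \<subseteq> UNIV \<and> length xs = t}"
    then have "take t (codeword t cols (nth xs)) = xs"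
      using map_nth[of xs] by (simp add: take_codeword)
    then show "xs \<in> take t ` gen_code t cols"
      unfolding gen_code_def by (metis rangeI image_eqI)
  qed (auto simp: gen_code_def take_codeword)
  have "card (gen_code t cols) = card (take t ` gen_code t cols)"
    by (rule card_image[OF inj, symmetric])
  also have "\<dots> = card (UNIV :: 'a set) ^ t"
    unfolding image by (rule card_lists_length_eq) simp
  finally show ?thesis .
qed

lemma dot_eq_0_if_supp_subset:
  assumes sub: "supp (codeword t cols m') \<subseteq> supp (codeword t cols m)"
    and "v \<in> set cols" "dot t m v = (0 :: 'a::comm_semiring_1)"
  shows "dot t m' v = 0"
proof -
  obtain n where n: "n < length cols" "cols ! n = v"
    using \<open>v \<in> set cols\<close> by (auto simp: in_set_conv_nth)
  have "n \<notin> supp (codeword t cols m)"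
    using n \<open>dot t m v = 0\<close> by (simp add: supp_def codeword_eq_map_dot)
  then show ?thesis
    using n sub by (auto simp: supp_def codeword_eq_map_dot)
qed

lemma cross_products_eq_if_supp_subset:
  fixes m m' :: "nat \<Rightarrow> 'a::field"
  assumes units: "\<And>i. i < t \<Longrightarrow> unit_vec i \<in> set cols"
    and pairs: "\<And>a b l. a < b \<Longrightarrow> b < t \<Longrightarrow> l \<noteq> 0 \<Longrightarrow> pair_col a b l \<in> set cols"
    and sub: "supp (codeword t cols m') \<subseteq> supp (codeword t cols m)"
    and "a < t" "b < t"
  shows "m' a * m b = m a * m' b"
proof -
  have zero: "m' i = 0" if "i < t" "m i = 0" for i
    using dot_eq_0_if_supp_subset[OF sub units] that by (simp add: dot_unit_vec)
  have ordered: "m' a * m b = m a * m' b" if ab: "a < b" "b < t" for a b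
  proof (cases "m a = 0 \<or> m b = 0")
    case True
    then show ?thesis using zero ab by auto
  next
    case False
    define l where "l = - (m a / m b)"
    have "l \<noteq> 0" "dot t m (pair_col a b l) = 0"
      using False ab by (simp_all add: l_def dot_pair_col)
    then have "dot t m' (pair_col a b l) = 0"
      using dot_eq_0_if_supp_subset[OF sub pairs[OF ab]] by blast
    then have "m' a + l * m' b = 0" using ab by (simp add: dot_pair_col)
    then show ?thesis using False by (simp add: l_def field_simps)
  qed
  then show ?thesis
    using ordered[of a b] ordered[of b a] \<open>a < t\<close> \<open>b < t\<close>
    by (cases a b rule: linorder_cases) (simp_all add: mult.commute)
qed

lemma minimal_code_if_unit_and_pair_cols:
  fixes cols :: "(nat \<Rightarrow> 'a::field) list"
  assumes units: "\<And>i. i < t \<Longrightarrow> unit_vec i \<in> set cols"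
    and pairs: "\<And>a b l. a < b \<Longrightarrow> b < t \<Longrightarrow> l \<noteq> 0 \<Longrightarrow> pair_col a b l \<in> set cols"
  shows "minimal_code (gen_code t cols)"
  unfolding minimal_code_def gen_code_def
proof clarify
  fix m m' :: "nat \<Rightarrow> 'a"
  assume ne: "supp (codeword t cols m) \<noteq> {}" and ne': "supp (codeword t cols m') \<noteq> {}"
    and sub: "supp (codeword t cols m') \<subseteq> supp (codeword t cols m)"
  obtain i where i: "i < t" "m i \<noteq> 0"
    using ne by (rule nonzero_coordinate_if_supp_codeword)
  define c where "c = m' i / m i"
  have m': "m' j = c * m j" if "j < t" for j
    using cross_products_eq_if_supp_subset[OF units pairs sub i(1) that] i(2)
    by (simp add: c_def field_simps)
  then have "codeword t cols m' = map (\<lambda>x. c * x) (codeword t cols m)"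
    by (rule codeword_scale)
  moreover have "c \<noteq> 0"
    using ne' m' by (metis mult_zero_left nonzero_coordinate_if_supp_codeword)
  ultimately show "\<exists>l. l \<noteq> 0 \<and> codeword t cols m' = map (\<lambda>x. l * x) (codeword t cols m)"
    by blast
qed

lemma two_le_card_UNIV: "2 \<le> card (UNIV :: 'a::{zero_neq_one,finite} set)"
  using card_mono[of UNIV "{0::'a, 1}"] by simp

lemma power_card_minus_one_eq_1:
  fixes x :: "'a::{field,finite}"
  assumes "x \<noteq> 0"
  shows "x ^ (card (UNIV :: 'a set) - 1) = 1"
proof -
  have "(\<Prod>y\<in>UNIV-{0}. x * y) = (\<Prod>y\<in>UNIV-{0}. y)"
    by (rule prod.reindex_bij_witness[of _ "\<lambda>y. y / x" "\<lambda>y. x * y"]) (use assms in auto)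
  moreover have "(\<Prod>y\<in>UNIV-{0}. x * y) = x ^ (card (UNIV :: 'a set) - 1) * (\<Prod>y\<in>UNIV-{0}. y)"
    by (simp add: prod.distrib card_Diff_subset)
  moreover have "(\<Prod>y\<in>UNIV-{0::'a}. y) \<noteq> 0"
    by simp
  ultimately show ?thesis
    by simp
qed

lemma power_of_generator_below_card:
  fixes \<xi> :: "'a::{field,finite}"
  assumes "\<xi> \<noteq> 0" "\<forall>x::'a. x \<noteq> 0 \<longrightarrow> (\<exists>k::nat. x = \<xi> ^ k)" "y \<noteq> 0"
  obtains k where "k < card (UNIV :: 'a set) - 1" "y = \<xi> ^ k"
proof -
  let ?n = "card (UNIV :: 'a set) - 1"
  obtain k where k: "y = \<xi> ^ k"
    using assms by blast
  have "?n > 0"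
    using two_le_card_UNIV[where 'a = 'a] by simp
  moreover have "\<xi> ^ k = (\<xi> ^ ?n) ^ (k div ?n) * \<xi> ^ (k mod ?n)"
    by (simp flip: power_mult power_add)
  ultimately show thesis
    using that[of "k mod ?n"] k power_card_minus_one_eq_1[OF assms(1)] by simp
qed

lemma dot_image_UNIV_if_two_nonzero:
  fixes m :: "nat \<Rightarrow> 'a::field"
  assumes units: "\<And>i. i < t \<Longrightarrow> unit_vec i \<in> set cols"
    and pairs: "\<And>a b l. a < b \<Longrightarrow> b < t \<Longrightarrow> l \<noteq> 0 \<Longrightarrow> pair_col a b l \<in> set cols"
    and ab: "a < b" "b < t" "m a \<noteq> 0" "m b \<noteq> 0"
  shows "dot t m ` set cols = UNIV"
proof -
  have "x \<in> dot t m ` set cols" for x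
  proof (cases "x = m a")
    case True
    then have "dot t m (unit_vec a) = x"
      using ab by (simp add: dot_unit_vec)
    then show ?thesis
      using units ab by (intro image_eqI[OF sym]) auto
  next
    case False
    define l where "l = (x - m a) / m b"
    have "l \<noteq> 0" "dot t m (pair_col a b l) = x"
      using False ab by (simp_all add: l_def dot_pair_col)
    then show ?thesis
      using pairs[OF ab(1,2)] by (intro image_eqI[OF sym]) auto
  qed
  then show ?thesis by blast
qed

lemma nonzero_in_dot_image_if_power_cols:
  fixes \<xi> :: "'a::{field,finite}"
  assumes gen: "\<xi> \<noteq> 0" "\<forall>x::'a. x \<noteq> 0 \<longrightarrow> (\<exists>k::nat. x = \<xi> ^ k)"
    and "0 < t" "unit_vec 0 \<in> set cols"
    and powers: "\<And>j. 1 \<le> j \<Longrightarrow> j < card (UNIV :: 'a set) - 1 \<Longrightarrow> (\<lambda>k. \<xi> ^ j * unit_vec 0 k) \<in> set cols"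
    and "m 0 \<noteq> 0" "x \<noteq> 0"
  shows "x \<in> dot t m ` set cols"
proof -
  obtain k where k: "k < card (UNIV :: 'a set) - 1" "x / m 0 = \<xi> ^ k"
    using power_of_generator_below_card[OF gen, of "x / m 0"] assms(6,7) by auto
  have x: "x = \<xi> ^ k * m 0"
    using k(2) assms(6) by (simp add: field_simps)
  show ?thesis
  proof (cases "k = 0")
    case True
    then have "dot t m (unit_vec 0) = x"
      using \<open>0 < t\<close> x by (simp add: dot_unit_vec)
    then show ?thesis
      using \<open>unit_vec 0 \<in> set cols\<close> by (rule image_eqI[OF sym])
  next
    case False
    then have "(\<lambda>k'. \<xi> ^ k * unit_vec 0 k') \<in> set cols"
      using k(1) by (intro powers) auto
    moreover have "dot t m (\<lambda>k'. \<xi> ^ k * unit_vec 0 k') = x"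
      using \<open>0 < t\<close> x by (simp add: dot_scale dot_unit_vec)
    ultimately show ?thesis by blast
  qed
qed

lemma dot_image_UNIV_if_single_nonzero:
  fixes \<xi> :: "'a::{field,finite}"
  assumes gen: "\<xi> \<noteq> 0" "\<forall>x::'a. x \<noteq> 0 \<longrightarrow> (\<exists>k::nat. x = \<xi> ^ k)"
    and t: "t \<ge> 2"
    and units: "\<And>i. i < t \<Longrightarrow> unit_vec i \<in> set cols"
    and pairs: "\<And>a b l. a < b \<Longrightarrow> b < t \<Longrightarrow> l \<noteq> 0 \<Longrightarrow> pair_col a b l \<in> set cols"
    and powers: "\<And>j. 1 \<le> j \<Longrightarrow> j < card (UNIV :: 'a set) - 1 \<Longrightarrow> (\<lambda>k. \<xi> ^ j * unit_vec 0 k) \<in> set cols"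
    and i: "i < t" "m i \<noteq> 0" "\<forall>j<t. j \<noteq> i \<longrightarrow> m j = 0"
  shows "dot t m ` set cols = UNIV"
proof -
  have "x \<in> dot t m ` set cols" for x
  proof -
    consider "x = 0" | "x \<noteq> 0" "i \<noteq> 0" | "x \<noteq> 0" "i = 0" by blast
    then show ?thesis
    proof cases
      case 1
      define j where "j = (if i = 0 then 1 else 0 :: nat)"
      have "j < t" "j \<noteq> i"
        using t by (auto simp: j_def)
      then have "dot t m (unit_vec j) = x"
        using i 1 by (simp add: dot_unit_vec)
      then show ?thesis
        using units[OF \<open>j < t\<close>] by (rule image_eqI[OF sym])
    next
      case 2
      have "dot t m (pair_col 0 i (x / m i)) = x"
        using 2 i by (simp add: dot_pair_col)
      moreover have "pair_col 0 i (x / m i) \<in> set cols"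
        using 2 i by (intro pairs) auto
      ultimately show ?thesis by (rule image_eqI[OF sym])
    next
      case 3
      then show ?thesis
        using nonzero_in_dot_image_if_power_cols[OF gen _ units powers] i by simp
    qed
  qed
  then show ?thesis by blast
qed

lemma property_P_if_unit_pair_and_power_cols:
  fixes \<xi> :: "'a::{field,finite}"
  assumes gen: "\<xi> \<noteq> 0" "\<forall>x::'a. x \<noteq> 0 \<longrightarrow> (\<exists>k::nat. x = \<xi> ^ k)"
    and t: "t \<ge> 2"
    and units: "\<And>i. i < t \<Longrightarrow> unit_vec i \<in> set cols"
    and pairs: "\<And>a b l. a < b \<Longrightarrow> b < t \<Longrightarrow> l \<noteq> 0 \<Longrightarrow> pair_col a b l \<in> set cols"
    and powers: "\<And>j. 1 \<le> j \<Longrightarrow> j < card (UNIV :: 'a set) - 1 \<Longrightarrow> (\<lambda>k. \<xi> ^ j * unit_vec 0 k) \<in> set cols"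
  shows "property_P (gen_code t cols)"
  unfolding property_P_def gen_code_def
proof clarify
  fix m
  assume "supp (codeword t cols m) \<noteq> {}"
  then obtain i where i: "i < t" "m i \<noteq> 0"
    by (rule nonzero_coordinate_if_supp_codeword)
  have "dot t m ` set cols = UNIV"
  proof (cases "\<exists>j<t. j \<noteq> i \<and> m j \<noteq> 0")
    case True
    then obtain j where j: "j < t" "j \<noteq> i" "m j \<noteq> 0" by blast
    show ?thesis
      using dot_image_UNIV_if_two_nonzero[OF units pairs, where a = "min i j" and b = "max i j" and m = m] i j
      by (auto simp: min_def max_def)
  next
    case False
    then show ?thesis
      using dot_image_UNIV_if_single_nonzero[OF gen t units pairs powers, where m = m] i by blast
  qed
  then show "set (codeword t cols m) = UNIV"
    by (simp add: set_codeword)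
qed

lemma card_ordered_pairs_below: "card {(i, j). i < j \<and> j < (t::nat)} = t choose 2"
proof (induction t)
  case (Suc t)
  let ?P = "{(i, j). i < j \<and> j < t}"
  have "finite ?P"
    by (rule finite_subset[of _ "{..<t} \<times> {..<t}"]) auto
  have "{(i, j). i < j \<and> j < Suc t} = ?P \<union> (\<lambda>i. (i, t)) ` {..<t}"
    by auto
  also have "card \<dots> = card ?P + card ((\<lambda>i. (i, t)) ` {..<t})"
    using \<open>finite ?P\<close> by (intro card_Un_disjoint) auto
  also have "card ((\<lambda>i. (i, t)) ` {..<t}) = t"
    by (simp add: card_image inj_on_def)
  finally show ?case
    using Suc by (simp add: numeral_2_eq_2)
qed simp

lemma pair_col_support:
  "i < j \<Longrightarrow> l \<noteq> 0 \<Longrightarrow> {k. pair_col i j l k \<noteq> 0} = {i, j}"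
  by (auto simp: pair_col_def unit_vec_def)

lemma pair_col_inject:
  fixes l l' :: "'a::field"
  assumes "i < j" "i' < j'" "l \<noteq> 0" "l' \<noteq> 0" and eq: "pair_col i j l = pair_col i' j' l'"
  shows "i = i' \<and> j = j' \<and> l = l'"
proof -
  have "{i, j} = {i', j'}"
    using pair_col_support[OF assms(1,3)] pair_col_support[OF assms(2,4)] eq by simp
  then have "i = i'" "j = j'"
    using assms(1,2) by (auto simp: doubleton_eq_iff)
  moreover have "pair_col i j l j = l" "pair_col i' j' l' j' = l'"
    using assms(1,2) by (simp_all add: pair_col_def unit_vec_def)
  ultimately show ?thesis
    using eq by metis
qed

lemma card_B_col_set:
  "card (B_col_set t :: (nat \<Rightarrow> 'a::{field,finite}) set) = (t choose 2) * (card (UNIV :: 'a set) - 1)"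
proof -
  define P where "P = {(i, j). i < j \<and> j < t}"
  let ?g = "\<lambda>((i, j), l::'a). pair_col i j l"
  have "B_col_set t = ?g ` (P \<times> (UNIV - {0}))"
  proof (intro equalityI subsetI)
    fix v :: "nat \<Rightarrow> 'a" assume "v \<in> B_col_set t"
    then obtain i j l where "v = pair_col i j l" "i < j" "j < t" "l \<noteq> 0"
      by (auto simp: B_col_set_def pair_col_def)
    then show "v \<in> ?g ` (P \<times> (UNIV - {0}))"
      by (intro image_eqI[of _ _ "((i, j), l)"]) (auto simp: P_def)
  qed (auto simp: B_col_set_def P_def pair_col_def)
  moreover have "inj_on ?g (P \<times> (UNIV - {0}))"
  proof (rule inj_onI)
    fix x y assume "x \<in> P \<times> (UNIV - {0})" "y \<in> P \<times> (UNIV - {0})" "?g x = ?g y"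
    moreover obtain i j l i' j' l' where "x = ((i, j), l)" "y = ((i', j'), l')"
      by (metis prod.exhaust)
    ultimately show "x = y"
      using pair_col_inject[of i j i' j' l l'] by (simp add: P_def)
  qed
  moreover have "card P = t choose 2"
    by (simp add: P_def card_ordered_pairs_below)
  ultimately show ?thesis
    by (simp add: card_image card_cartesian_product card_Diff_subset)
qed

lemma unit_vec_in_A'_cols: "i < t \<Longrightarrow> unit_vec i \<in> set (A'_cols t B \<xi>)"
  by (simp add: A'_cols_def)

lemma pair_col_in_A'_cols:
  "set B = B_col_set t \<Longrightarrow> a < b \<Longrightarrow> b < t \<Longrightarrow> l \<noteq> 0 \<Longrightarrow> pair_col a b l \<in> set (A'_cols t B \<xi>)"
  unfolding A'_cols_def B_col_set_def pair_col_def by auto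

lemma power_col_in_A'_cols:
  fixes \<xi> :: "'a::{field,finite}"
  shows "1 \<le> j \<Longrightarrow> j < card (UNIV :: 'a set) - 1 \<Longrightarrow> (\<lambda>k. \<xi> ^ j * unit_vec 0 k) \<in> set (A'_cols t B \<xi>)"
  by (auto simp: A'_cols_def)

lemma length_A'_cols:
  fixes B :: "(nat \<Rightarrow> 'a::{field,finite}) list"
  assumes "distinct B" "set B = B_col_set t"
  shows "length (A'_cols t B \<xi>) = (t choose 2) * (card (UNIV :: 'a set) - 1) + t + card (UNIV :: 'a set) - 2"
proof -
  have "length B = (t choose 2) * (card (UNIV :: 'a set) - 1)"
    using distinct_card[OF assms(1)] assms(2) card_B_col_set[where 'a = 'a] by simp
  then show ?thesis
    using two_le_card_UNIV[where 'a = 'a] by (simp add: A'_cols_def)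
qed

theorem mainTheorem7:
  fixes \<xi> :: "'a::{field,finite}" and t :: nat and B :: "(nat \<Rightarrow> 'a) list"
  assumes gen: "\<xi> \<noteq> 0" "\<forall>x::'a. x \<noteq> 0 \<longrightarrow> (\<exists>k::nat. x = \<xi> ^ k)"
    and t: "t \<ge> 2"
    and B: "distinct B" "set B = B_col_set t"
  shows "length (A'_cols t B \<xi>) = (t choose 2) * (card (UNIV::'a set) - 1) + t + card (UNIV::'a set) - 2
    \<and> card (gen_code t (A'_cols t B \<xi>)) = card (UNIV::'a set) ^ t
    \<and> minimal_code (gen_code t (A'_cols t B \<xi>))
    \<and> property_P (gen_code t (A'_cols t B \<xi>))"
proof (intro conjI)
  note units = unit_vec_in_A'_cols[of _ t B \<xi>]
  note pairs = pair_col_in_A'_cols[OF B(2), of _ _ _ \<xi>]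
  note powers = power_col_in_A'_cols[of _ \<xi> t B]
  show "length (A'_cols t B \<xi>) = (t choose 2) * (card (UNIV::'a set) - 1) + t + card (UNIV::'a set) - 2"
    using B by (rule length_A'_cols)
  show "card (gen_code t (A'_cols t B \<xi>)) = card (UNIV::'a set) ^ t"
    by (rule card_gen_code_systematic[OF A'_cols_def])
  show "minimal_code (gen_code t (A'_cols t B \<xi>))"
    by (rule minimal_code_if_unit_and_pair_cols[OF units pairs])
  show "property_P (gen_code t (A'_cols t B \<xi>))"
    by (rule property_P_if_unit_pair_and_power_cols[OF gen t units pairs powers])
qed

end
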